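(* If $n\xrightarrow{b|c} m$ is a transition of $\mathcal{D}_{p/q}$, then $$c=(b-(n+1)p)\bmod q\qquad\text{and}\qquad m=\left\lceil \frac{(n+1)p-b}{q}-1\right\rceil .$$
   Context: Let $p>q>1$ be coprime integers, $A_q=\{0,\dots,q-1\}$ and $B=\{p-(2q-1),\dots,p-1\}$. For $n\in\mathbb{N}$ and $a\in\mathbb{Z}$, let $\tau(n,a)=\frac{np+a}{q}$, defined only when $q$ divides $np+a$. For $a\in B$ let $\omega(a)=\{(b,c)\in A_q\times A_q : c-b=a-(p-q)\}$. The transducer $\mathcal{D}_{p/q}$ has state set $\mathbb{N}$, input and output alphabet $A_q$, and a transition $n\xrightarrow{b|c}\tau(n,a)$ (input $b$, output $c$) for every $n\in\mathbb{N}$, $a\in B$ with $\tau(n,a)$ defined, and $(b,c)\in\omega(a)$; no other transitions. Here $x\bmod q\in\{0,\dots,q-1\}$ is the remainder of Euclidean division, and $\lceil x\rceil$ is the integer $k$ with $k-1<x\le k$. *)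

theory Defs
  imports Complex_Main
begin

definition A :: "int \<Rightarrow> int set" where
  "A q = {0..q-1}"

definition B :: "int \<Rightarrow> int \<Rightarrow> int set" where
  "B p q = {p-(2*q-1)..p-1}"

definition tau :: "int \<Rightarrow> int \<Rightarrow> int \<Rightarrow> int \<Rightarrow> int option" where
  "tau p q n a = (if q dvd (n*p+a) then Some ((n*p+a) div q) else None)"

definition omega :: "int \<Rightarrow> int \<Rightarrow> int \<Rightarrow> (int \<times> int) set" where
  "omega p q a = {(b,c). b \<in> A q \<and> c \<in> A q \<and> c - b = a - (p - q)}"

definition transition :: "int \<Rightarrow> int \<Rightarrow> nat \<Rightarrow> int \<Rightarrow> int \<Rightarrow> nat \<Rightarrow> bool" where
  "transition p q n b c m \<longleftrightarrow>
     (\<exists>a \<in> B p q. tau p q (int n) a = Some (int m) \<and> (b, c) \<in> omega p q a)"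

end

theory Submission
  imports Defs
begin

text \<open>A transition n \<rightarrow> m with a \<in> B and (b,c) \<in> \<omega>(a) means q m = n p + a and
  a = c - b + p - q, i.e. (n+1) p - b = q (m+1) - c with 0 \<le> c < q. Hence c is the
  remainder of b - (n+1) p modulo q, and m + 1 is the ceiling of ((n+1) p - b) / q.\<close>

lemma transition_division_eq:
  assumes "transition p q n b c m"
  shows "(int n + 1) * p - b = q * (int m + 1) - c \<and> 0 \<le> c \<and> c < q"
proof -
  obtain a where tau: "tau p q (int n) a = Some (int m)" and bc: "(b, c) \<in> omega p q a"
    using assms unfolding transition_def by blast
  have "q * int m = int n * p + a"
    using tau unfolding tau_def by (auto split: if_splits)
  moreover have "c - b = a - (p - q)" and "0 \<le> c" and "c < q"
    using bc unfolding omega_def A_def by auto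
  ultimately show ?thesis
    by (simp add: algebra_simps)
qed

lemma ceiling_mult_sub_remainder:
  fixes q k c :: int
  assumes "0 \<le> c" and "c < q"
  shows "\<lceil>real_of_int (q * k - c) / real_of_int q\<rceil> = k"
proof -
  have q_pos: "real_of_int q > 0"
    using assms by simp
  have "real_of_int (q * k - c) / real_of_int q = real_of_int k - real_of_int c / real_of_int q"
    using q_pos by (simp add: field_simps)
  moreover have "0 \<le> real_of_int c / real_of_int q" and "real_of_int c / real_of_int q < 1"
    using assms q_pos by (auto simp: divide_simps)
  ultimately show ?thesis
    by (intro ceiling_unique) auto
qed

theorem mainTheorem4:
  fixes p q :: int and n m :: nat and b c :: int
  assumes "p > q" and "q > 1" and "coprime p q"
    and "transition p q n b c m"
  shows "c = (b - (int n + 1) * p) mod q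
       \<and> int m = \<lceil>real_of_int ((int n + 1) * p - b) / real_of_int q - 1\<rceil>"
proof
  have eq: "(int n + 1) * p - b = q * (int m + 1) - c" and c: "0 \<le> c" "c < q"
    using transition_division_eq [OF assms(4)] by auto
  have "b - (int n + 1) * p = c + q * (- (int m + 1))"
    using eq by (simp add: algebra_simps)
  then show "c = (b - (int n + 1) * p) mod q"
    using c by simp
  have "\<lceil>real_of_int ((int n + 1) * p - b) / real_of_int q\<rceil> = int m + 1"
    unfolding eq using ceiling_mult_sub_remainder [OF c] .
  then show "int m = \<lceil>real_of_int ((int n + 1) * p - b) / real_of_int q - 1\<rceil>"
    by (simp add: ceiling_diff_one)
qed

end
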